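(* Let $n\ge r\ge2$ be integers. Then $$B_n^{(r)}(x)=-2\,r^{n-1}\sum_{\substack{k\ge0\\ 2k+1\le r-1}}r^{-2k}\,\frac{s(r,r-2k-1)}{2k+1}\,\frac{\binom{n}{2k}}{\binom{r-1}{2k+1}}\,B_{n-2k}\!\left(\frac{x}{r}\right)\;-\;2\,r^{n-1}\sum_{\substack{k:\ 2k+1\ge r\\ 2k\le n}}r^{-2k}\,\frac{B^{(r)}_{2k+1}}{2k+1}\binom{n}{2k}B_{n-2k}\!\left(\frac{x}{r}\right),$$ where for $2k+1\ge r$, $$\frac{B^{(r)}_{2k+1}}{2k+1}=\binom{2k}{r-1}\sum_{j=1}^{r}(-1)^{j-1}s(r,j)\,\frac{B_{2k+1-r+j}}{2k+1-r+j}.$$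
   Context: For a positive integer $r$, the Bernoulli polynomials of order $r$ are defined by $\sum_{n\ge0}B_n^{(r)}(x)\frac{t^n}{n!}=\left(\frac{t}{e^t-1}\right)^re^{xt}$, and $B_n^{(r)}=B_n^{(r)}(0)$. $B_n(x)=B_n^{(1)}(x)$ are the Bernoulli polynomials and $B_m=B_m(0)$ the Bernoulli numbers. $s(n,l)$ denotes the (signed) Stirling numbers of the first kind, $x(x-1)\cdots(x-n+1)=\sum_l s(n,l)x^l$. *)

theory Defs
  imports "HOL-Computational_Algebra.Formal_Power_Series" "HOL-Combinatorics.Stirling"
begin

text \<open>The power series t/(e^t - 1), written as the inverse of (e^t - 1)/t.\<close>
definition bern_gf :: "real fps" where
  "bern_gf = inverse (fps_shift 1 (fps_exp 1 - 1))"

definition bernpoly_ord :: "nat \<Rightarrow> nat \<Rightarrow> real \<Rightarrow> real" where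
  "bernpoly_ord r n x = fact n * fps_nth (bern_gf ^ r * fps_exp x) n"

definition bernnum_ord :: "nat \<Rightarrow> nat \<Rightarrow> real" where
  "bernnum_ord r n = bernpoly_ord r n 0"

definition bernpoly :: "nat \<Rightarrow> real \<Rightarrow> real" where
  "bernpoly n x = bernpoly_ord 1 n x"

definition bernnum :: "nat \<Rightarrow> real" where
  "bernnum m = bernpoly m 0"

definition sstirling :: "nat \<Rightarrow> nat \<Rightarrow> real" where
  "sstirling n l = (-1) ^ (n - l) * real (stirling n l)"

end

theory Submission
  imports Defs
begin

text \<open>
  Write F(t) = t/(e^t - 1). Since F(-t) = F(t) e^t, the odd part of F^r satisfies
  F^r(t) - F^r(-t) = F^r(t) (1 - e^{rt}) = -r t F^r(t) / F(rt); so F^r(t) = -(2/r) O(t) F(rt),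
  where O(t) = (F^r(t) - F^r(-t))/(2t) has the coefficients B^(r)_{2k+1}/(2k+1)!.
  Multiplying by e^{xt} = e^{(x/r)(rt)} and comparing coefficients expands B^(r)_n(x) in the
  B_{n-2k}(x/r). The numbers B^(r)_{2k+1} are then computed from the recurrence
  r B^(r+1)_m = (r - m) B^(r)_m - r m B^(r)_{m-1}, the coefficientwise form of
  t F' = (1 - t) F - F^2: by induction on r they are quotients of Stirling numbers by binomial
  coefficients below the order r, and Stirling-weighted sums of Bernoulli numbers above it.
\<close>

unbundle fps_syntax

lemma fps_exp_mult_exp_neg: "fps_exp (c :: 'a :: field_char_0) * fps_exp (- c) = 1"
  by (simp flip: fps_exp_add_mult)

definition fps_odd_div_X :: "'a :: comm_ring_1 fps \<Rightarrow> 'a fps" where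
  "fps_odd_div_X f = Abs_fps (\<lambda>n. if even n then f $ Suc n else 0)"

lemma fps_diff_reflect:
  "f - (f oo - fps_X) = fps_const 2 * fps_X * fps_odd_div_X (f :: 'a :: comm_ring_1 fps)"
proof (rule fps_ext)
  fix n
  show "(f - (f oo - fps_X)) $ n = (fps_const 2 * fps_X * fps_odd_div_X f) $ n"
  proof (cases n)
    case (Suc m)
    then show ?thesis
      by (cases "even m") (simp_all add: fps_compose_uminus' fps_odd_div_X_def mult.assoc)
  qed (simp add: fps_compose_uminus' mult.assoc)
qed

lemma sum_vanishing_odd_terms:
  fixes g :: "nat \<Rightarrow> 'a :: comm_monoid_add"
  assumes "\<And>i. odd i \<Longrightarrow> g i = 0"
  shows "(\<Sum>i=0..n. g i) = (\<Sum>k | 2 * k \<le> n. g (2 * k))"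
proof -
  have "(\<Sum>i=0..n. g i) = (\<Sum>i | i \<le> n \<and> even i. g i)"
    using assms by (intro sum.mono_neutral_right) auto
  also have "{i. i \<le> n \<and> even i} = (\<lambda>k. 2 * k) ` {k. 2 * k \<le> n}"
    by (auto elim!: evenE)
  finally show ?thesis
    by (simp add: sum.reindex inj_on_def)
qed

definition bern_denom :: "real fps" where
  "bern_denom = fps_shift 1 (fps_exp 1 - 1)"

lemma bern_gf_eq_inverse: "bern_gf = inverse bern_denom"
  by (simp add: bern_gf_def bern_denom_def)

lemma bern_denom_nth_0: "bern_denom $ 0 = 1"
  by (simp add: bern_denom_def)

lemma fps_X_mult_bern_denom: "fps_X * bern_denom = fps_exp 1 - 1"
  by (rule fps_ext) (auto simp: fps_exp_def bern_denom_def)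

lemma bern_gf_mult_denom: "bern_gf * bern_denom = 1"
  unfolding bern_gf_eq_inverse by (rule inverse_mult_eq_1) (simp add: bern_denom_nth_0)

lemma bern_gf_nth_0: "bern_gf $ 0 = 1"
  by (simp add: bern_gf_eq_inverse bern_denom_nth_0)

lemma bernpoly_ord_conv_nth: "bernpoly_ord r n x = fact n * (bern_gf ^ r * fps_exp x) $ n"
  by (simp add: bernpoly_ord_def)

lemma bernnum_ord_conv_nth: "bernnum_ord r n = fact n * (bern_gf ^ r) $ n"
  by (simp add: bernnum_ord_def bernpoly_ord_def)

lemma bernpoly_conv_nth: "bernpoly n x = fact n * (bern_gf * fps_exp x) $ n"
  by (simp add: bernpoly_def bernpoly_ord_def)

lemma bernnum_ord_0: "bernnum_ord r 0 = 1"
  by (simp add: bernnum_ord_conv_nth fps_power_zeroth bern_gf_nth_0)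

lemma bernnum_ord_1: "bernnum_ord 1 m = bernnum m"
  by (simp add: bernnum_ord_def bernnum_def bernpoly_def)

lemma bern_denom_reflect: "bern_denom oo - fps_X = bern_denom * fps_exp (-1)"
proof -
  have "fps_X * (bern_denom oo - fps_X) = 1 - fps_exp (-1)"
    using arg_cong[OF fps_X_mult_bern_denom, of "\<lambda>f. f oo - fps_X"]
    by (simp add: fps_compose_mult_distrib fps_compose_sub_distrib minus_equation_iff[of "fps_X * _"])
  also have "\<dots> = (fps_exp 1 - 1) * fps_exp (-1)"
    by (simp add: algebra_simps fps_exp_mult_exp_neg)
  also have "\<dots> = fps_X * (bern_denom * fps_exp (-1))"
    by (simp only: fps_X_mult_bern_denom flip: mult.assoc)
  finally show ?thesis
    by simp
qed

lemma bern_gf_reflect: "bern_gf oo - fps_X = bern_gf * fps_exp 1"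
proof -
  have "bern_gf oo - fps_X = inverse (bern_denom oo - fps_X)"
    unfolding bern_gf_eq_inverse by (rule fps_inverse_compose) (simp_all add: bern_denom_nth_0)
  thus ?thesis
    by (simp add: bern_denom_reflect fps_inverse_mult fps_exp_neg bern_gf_eq_inverse)
qed

lemma bern_gf_dilate_mult_denom:
  "(bern_gf oo (fps_const c * fps_X)) * (bern_denom oo (fps_const c * fps_X)) = 1"
proof -
  have "(bern_gf oo (fps_const c * fps_X)) * (bern_denom oo (fps_const c * fps_X))
      = (bern_gf * bern_denom) oo (fps_const c * fps_X)"
    by (rule fps_compose_mult_distrib[symmetric]) simp
  thus ?thesis
    by (simp only: bern_gf_mult_denom fps_compose_1)
qed

lemma fps_exp_minus_1_dilate:
  "fps_exp c - 1 = fps_const c * fps_X * (bern_denom oo (fps_const c * fps_X))"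
proof -
  have "fps_exp c - 1 = (fps_X * bern_denom) oo (fps_const c * fps_X)"
    by (simp add: fps_X_mult_bern_denom fps_compose_sub_distrib)
  thus ?thesis
    by (simp add: fps_compose_mult_distrib)
qed

lemma bern_gf_power_eq_odd_part:
  assumes "r > 0"
  shows "bern_gf ^ r =
    - (fps_const (2 / real r) * fps_odd_div_X (bern_gf ^ r) * (bern_gf oo (fps_const (real r) * fps_X)))"
proof -
  let ?F = "bern_gf ^ r" and ?O = "fps_odd_div_X (bern_gf ^ r)"
  let ?Fr = "bern_gf oo (fps_const (real r) * fps_X)"
    and ?Dr = "bern_denom oo (fps_const (real r) * fps_X)"
  have "?F oo - fps_X = ?F * fps_exp (real r)"
    by (simp add: fps_compose_power[symmetric] bern_gf_reflect power_mult_distrib fps_exp_power_mult)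
  hence "fps_X * (fps_const 2 * ?O) = - ?F * (fps_exp (real r) - 1)"
    using fps_diff_reflect[of ?F] by (simp add: algebra_simps)
  also have "\<dots> = fps_X * - (fps_const (real r) * ?F * ?Dr)"
    by (simp add: fps_exp_minus_1_dilate algebra_simps)
  finally have odd_part: "fps_const (real r) * ?F * ?Dr = - (fps_const 2 * ?O)"
    by (simp only: mult_cancel_left fps_X_neq_zero simp_thms ac_simps minus_equation_iff minus_minus)
  have "?F = ?F * ?Dr * ?Fr"
    using bern_gf_dilate_mult_denom[of "real r"] by (simp add: ac_simps)
  also have "?F * ?Dr = fps_const (1 / real r) * (fps_const (real r) * ?F * ?Dr)"
    using assms by (simp add: mult.assoc[symmetric])
  finally show ?thesis
    unfolding odd_part by (simp add: mult.assoc[symmetric])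
qed

lemma bern_gf_power_mult_exp_nth:
  assumes "r > 0"
  shows "(bern_gf ^ r * fps_exp x) $ n = - (2 / real r) * (\<Sum>k | 2 * k \<le> n.
    (bern_gf ^ r) $ (2 * k + 1) * (real r ^ (n - 2 * k) * (bern_gf * fps_exp (x / real r)) $ (n - 2 * k)))"
proof -
  let ?O = "fps_odd_div_X (bern_gf ^ r)" and ?P = "bern_gf * fps_exp (x / real r)"
  have "?P oo (fps_const (real r) * fps_X) = (bern_gf oo (fps_const (real r) * fps_X)) * fps_exp x"
    using assms by (simp add: fps_compose_mult_distrib)
  hence "bern_gf ^ r * fps_exp x =
      - (fps_const (2 / real r) * (?O * (?P oo (fps_const (real r) * fps_X))))"
    by (subst bern_gf_power_eq_odd_part[OF assms]) (simp add: ac_simps)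
  hence "(bern_gf ^ r * fps_exp x) $ n =
      - (2 / real r * (\<Sum>i=0..n. ?O $ i * (real r ^ (n - i) * ?P $ (n - i))))"
    by (simp only: fps_neg_nth fps_mult_left_const_nth fps_mult_nth[of ?O] fps_nth_compose_linear)
  also have "(\<Sum>i=0..n. ?O $ i * (real r ^ (n - i) * ?P $ (n - i))) =
      (\<Sum>k | 2 * k \<le> n. ?O $ (2 * k) * (real r ^ (n - 2 * k) * ?P $ (n - 2 * k)))"
    by (rule sum_vanishing_odd_terms) (simp add: fps_odd_div_X_def)
  finally show ?thesis
    by (simp add: fps_odd_div_X_def)
qed

lemma bernpoly_ord_odd_expansion:
  assumes "r > 0" "n > 0"
  shows "bernpoly_ord r n x = - 2 * real r ^ (n - 1) *
     (\<Sum>k | 2 * k \<le> n. (bernnum_ord r (2 * k + 1) / (real r ^ (2 * k) * (2 * k + 1))) *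
             real (n choose (2 * k)) * bernpoly (n - 2 * k) (x / real r))"
proof -
  let ?P = "bern_gf * fps_exp (x / real r)"
  have "fact n * (- (2 / real r) *
        ((bern_gf ^ r) $ (2 * k + 1) * (real r ^ (n - 2 * k) * ?P $ (n - 2 * k)))) =
      - 2 * real r ^ (n - 1) * ((bernnum_ord r (2 * k + 1) / (real r ^ (2 * k) * (2 * k + 1))) *
            real (n choose (2 * k)) * bernpoly (n - 2 * k) (x / real r))"
    if "2 * k \<le> n" for k
  proof -
    have "real r * real r ^ (n - 1) = real r ^ (n - 2 * k) * real r ^ (2 * k)"
      using that assms by (simp flip: power_add power_Suc)
    hence pow: "real r ^ (n - 1) = real r ^ (n - 2 * k) * real r ^ (2 * k) / real r"
      using assms by (simp add: field_simps)
    have choose: "real (n choose (2 * k)) = fact n / (fact (2 * k) * fact (n - 2 * k))"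
      using that by (rule binomial_fact)
    have odd_coeff: "bernnum_ord r (2 * k + 1) / (real r ^ (2 * k) * (2 * k + 1)) =
        fact (2 * k) * (bern_gf ^ r) $ (2 * k + 1) / real r ^ (2 * k)"
      by (simp add: bernnum_ord_conv_nth)
    show ?thesis
      using assms unfolding odd_coeff bernpoly_conv_nth pow choose
      by (simp add: field_simps)
  qed
  thus ?thesis
    by (simp add: bernpoly_ord_conv_nth bern_gf_power_mult_exp_nth[OF assms(1)] sum_distrib_left)
qed

lemma bern_denom_deriv: "bern_denom + fps_X * fps_deriv bern_denom = fps_X * bern_denom + 1"
proof -
  have "bern_denom + fps_X * fps_deriv bern_denom = fps_deriv (fps_X * bern_denom)"
    by (simp add: fps_deriv_mult)
  thus ?thesis
    by (simp add: fps_X_mult_bern_denom)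
qed

lemma bern_gf_square: "bern_gf ^ 2 = (1 - fps_X) * bern_gf - fps_X * fps_deriv bern_gf"
proof -
  have deriv: "fps_deriv bern_gf = - fps_deriv bern_denom * bern_gf ^ 2"
    unfolding bern_gf_eq_inverse by (rule fps_inverse_deriv) (simp add: bern_denom_nth_0)
  have "bern_gf ^ 2 = bern_gf ^ 2 * (bern_denom + fps_X * fps_deriv bern_denom - fps_X * bern_denom)"
    by (simp add: bern_denom_deriv)
  also have "\<dots> =
      (1 - fps_X) * bern_gf * (bern_gf * bern_denom) + fps_X * fps_deriv bern_denom * bern_gf ^ 2"
    by (simp add: algebra_simps power2_eq_square)
  finally show ?thesis
    by (simp add: bern_gf_mult_denom deriv mult.assoc)
qed

lemma bern_gf_power_Suc:
  "fps_const (real r) * bern_gf ^ Suc r =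
    fps_const (real r) * (1 - fps_X) * bern_gf ^ r - fps_X * fps_deriv (bern_gf ^ r)"
proof (cases r)
  case (Suc q)
  have "bern_gf ^ Suc r = bern_gf ^ q * bern_gf ^ 2"
    using Suc by (simp flip: power_add)
  also have "\<dots> = (1 - fps_X) * bern_gf ^ r - fps_X * fps_deriv bern_gf * bern_gf ^ q"
    using Suc by (simp add: bern_gf_square algebra_simps)
  finally have square: "bern_gf ^ Suc r = \<dots>" .
  have "fps_deriv (bern_gf ^ r) = fps_const (real r) * fps_deriv bern_gf * bern_gf ^ q"
    by (simp only: fps_deriv_power Suc diff_Suc_1)
  thus ?thesis
    unfolding square by (simp add: algebra_simps)
qed simp

lemma bernnum_ord_Suc:
  assumes "m > 0"
  shows "real r * bernnum_ord (Suc r) m =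
    (real r - real m) * bernnum_ord r m - real r * real m * bernnum_ord r (m - 1)"
proof -
  obtain k where k: "m = Suc k"
    using assms by (cases m) auto
  have "(fps_const (real r) * bern_gf ^ Suc r) $ m =
      (fps_const (real r) * (1 - fps_X) * bern_gf ^ r - fps_X * fps_deriv (bern_gf ^ r)) $ m"
    by (simp only: bern_gf_power_Suc)
  hence coeff: "real r * (bern_gf ^ Suc r) $ m =
      real r * (bern_gf ^ r) $ m - real r * (bern_gf ^ r) $ k - real m * (bern_gf ^ r) $ m"
    by (simp add: k algebra_simps del: power_Suc)
  have "real r * bernnum_ord (Suc r) m = fact m * (real r * (bern_gf ^ Suc r) $ m)"
    by (simp add: bernnum_ord_conv_nth del: power_Suc)
  also have "\<dots> = (real r - real m) * (fact m * (bern_gf ^ r) $ m)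
      - real r * real m * (fact k * (bern_gf ^ r) $ k)"
    unfolding coeff by (simp add: k algebra_simps)
  finally show ?thesis
    by (simp add: bernnum_ord_conv_nth k)
qed

lemma bernnum_ord_Suc_choose:
  assumes "0 < m" "m \<le> r"
  shows "bernnum_ord (Suc r) m * real (r choose m) =
    bernnum_ord r m * real ((r - 1) choose m)
    - real r * (bernnum_ord r (m - 1) * real ((r - 1) choose (m - 1)))"
proof -
  have "(r - m) * (r choose m) = r * ((r - 1) choose m)"
    by (rule binomial_absorb_comp)
  hence absorb: "(real r - real m) * real (r choose m) = real r * real ((r - 1) choose m)"
    using assms by (metis of_nat_diff of_nat_mult)
  have "m * (r choose m) = r * ((r - 1) choose (m - 1))"
    by (rule times_binomial_minus1_eq[OF assms(1)])
  hence minus1: "real m * real (r choose m) = real r * real ((r - 1) choose (m - 1))"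
    by (metis of_nat_mult)
  have "real r * (bernnum_ord (Suc r) m * real (r choose m)) =
      (real r - real m) * real (r choose m) * bernnum_ord r m
      - real r * (real m * real (r choose m)) * bernnum_ord r (m - 1)"
    unfolding mult.assoc[symmetric] bernnum_ord_Suc[OF assms(1)] by (simp add: algebra_simps)
  also have "\<dots> = real r * (bernnum_ord r m * real ((r - 1) choose m)
      - real r * (bernnum_ord r (m - 1) * real ((r - 1) choose (m - 1))))"
    unfolding absorb minus1 by (simp add: algebra_simps)
  finally show ?thesis
    using assms by simp
qed

lemma bernnum_ord_below_order:
  assumes "m < r"
  shows "bernnum_ord r m * real ((r - 1) choose m) = (-1) ^ m * real (stirling r (r - m))"
  using assms
proof (induction r arbitrary: m)
  case (Suc r)
  show ?case
  proof (cases m)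
    case 0
    then show ?thesis by (simp add: bernnum_ord_0)
  next
    case (Suc l)
    with Suc.prems have "m \<le> r" "0 < r"
      by auto
    have "bernnum_ord r m * real ((r - 1) choose m) = (-1) ^ m * real (stirling r (r - m))"
      using Suc.IH[of m] \<open>m \<le> r\<close> \<open>0 < r\<close> by (cases "m = r") simp_all
    moreover have "bernnum_ord r l * real ((r - 1) choose l) =
        - ((-1) ^ m * real (stirling r (Suc (r - m))))"
      using Suc.IH[of l] Suc \<open>m \<le> r\<close> by (simp add: Suc_diff_Suc)
    moreover have "stirling (Suc r) (Suc r - m) = r * stirling r (Suc (r - m)) + stirling r (r - m)"
      using \<open>m \<le> r\<close> by (simp add: Suc_diff_le)
    ultimately show ?thesis
      using bernnum_ord_Suc_choose[of m r] Suc \<open>m \<le> r\<close> by (simp add: algebra_simps)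
  qed
qed simp

lemma bernnum_ord_below_order_sstirling:
  assumes "m < r"
  shows "bernnum_ord r m = sstirling r (r - m) / real ((r - 1) choose m)"
proof -
  have "real ((r - 1) choose m) \<noteq> 0"
    using assms by simp
  thus ?thesis
    using bernnum_ord_below_order[OF assms] assms by (simp add: sstirling_def field_simps)
qed

text \<open>With the unsigned Stirling numbers c(r,j) = |s(r,j)|, the weights of the paper are
  (-1)^(j-1) s(r,j) = (-1)^(r-1) c(r,j).\<close>

definition stirling_bernnum_sum :: "nat \<Rightarrow> nat \<Rightarrow> real" where
  "stirling_bernnum_sum r m =
    (\<Sum>j=1..r. real (stirling r j) * (bernnum (m - r + j) / real (m - r + j)))"

lemma stirling_bernnum_sum_Suc:
  assumes "0 < r" "r < m"
  shows "stirling_bernnum_sum (Suc r) m =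
    stirling_bernnum_sum r m + real r * stirling_bernnum_sum r (m - 1)"
proof -
  let ?\<beta> = "\<lambda>i. bernnum i / real i"
  have shift: "(\<Sum>j=1..Suc k. g j) = (\<Sum>i=0..k. g (Suc i))" for k and g :: "nat \<Rightarrow> real"
    using sum.shift_bounds_cl_Suc_ivl[of g 0 k] by simp
  have idx: "m - Suc r + Suc i = m - r + i" "m - 1 - r + Suc i = m - r + i" for i
    using assms by simp_all
  have "stirling_bernnum_sum (Suc r) m = (\<Sum>i=0..r. real (stirling (Suc r) (Suc i)) * ?\<beta> (m - r + i))"
    unfolding stirling_bernnum_sum_def shift idx ..
  also have "\<dots> = (\<Sum>i=0..r. real (stirling r i) * ?\<beta> (m - r + i))
      + real r * (\<Sum>i=0..r. real (stirling r (Suc i)) * ?\<beta> (m - r + i))"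
    unfolding sum_distrib_left sum.distrib[symmetric]
    by (intro sum.cong refl) (simp add: algebra_simps add_divide_distrib)
  also have "(\<Sum>i=0..r. real (stirling r i) * ?\<beta> (m - r + i)) = stirling_bernnum_sum r m"
    unfolding stirling_bernnum_sum_def using assms by (simp add: sum.atLeast_Suc_atMost)
  also have "(\<Sum>i=0..r. real (stirling r (Suc i)) * ?\<beta> (m - r + i)) = stirling_bernnum_sum r (m - 1)"
  proof -
    have "stirling_bernnum_sum r (m - 1) = (\<Sum>j=1..Suc r. real (stirling r j) * ?\<beta> (m - 1 - r + j))"
      by (simp add: stirling_bernnum_sum_def)
    also have "\<dots> = (\<Sum>i=0..r. real (stirling r (Suc i)) * ?\<beta> (m - r + i))"
      unfolding shift idx ..
    finally show ?thesis ..
  qed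
  finally show ?thesis .
qed

lemma bernnum_ord_above_order:
  assumes "0 < r" "r \<le> m"
  shows "bernnum_ord r m =
    (-1) ^ (r - 1) * real m * real ((m - 1) choose (r - 1)) * stirling_bernnum_sum r m"
  using assms
proof (induction r arbitrary: m rule: nat_induct_non_zero)
  case 1
  then show ?case
    using bernnum_ord_1[of m] by (simp add: stirling_bernnum_sum_def)
next
  case (Suc r)
  let ?S = "stirling_bernnum_sum r" and ?\<sigma> = "(-1) ^ (r - 1) :: real"
  define a b c where "a = real ((m - 1) choose (r - 1))" and "b = real ((m - 1) choose r)"
    and "c = real ((m - 2) choose (r - 1))"
  have "(m - r) * ((m - 1) choose (r - 1)) = (m - 1) * ((m - 2) choose (r - 1))"
    using binomial_absorb_comp[of "m - 1" "r - 1"] Suc by (simp add: diff_diff_eq numeral_2_eq_2)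
  hence "real (m - r) * a = real (m - 1) * c"
    unfolding a_def c_def by (metis of_nat_mult)
  hence ac: "(real m - real r) * a = real (m - 1) * c"
    using Suc by (simp add: of_nat_diff)
  have "r * ((m - 1) choose r) = (m - 1) * ((m - 2) choose (r - 1))"
    using times_binomial_minus1_eq[of r "m - 1"] Suc by (simp add: diff_diff_eq numeral_2_eq_2)
  hence bc: "real r * b = real (m - 1) * c"
    unfolding b_def c_def by (metis of_nat_mult)
  have sign: "(-1) ^ r = - ?\<sigma>"
    using \<open>0 < r\<close> by (cases r) simp_all
  have "real r * bernnum_ord (Suc r) m =
      (real r - real m) * (?\<sigma> * real m * a * ?S m)
      - real r * real m * (?\<sigma> * real (m - 1) * c * ?S (m - 1))"
    using bernnum_ord_Suc[of m r] Suc.IH[of m] Suc.IH[of "m - 1"] Suc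
    by (simp add: a_def c_def numeral_2_eq_2)
  also have "\<dots> = - ?\<sigma> * real m * ?S m * ((real m - real r) * a)
      - ?\<sigma> * real r * real m * ?S (m - 1) * (real (m - 1) * c)"
    by (simp add: algebra_simps)
  also have "\<dots> = real r * ((-1) ^ r * real m * b * (?S m + real r * ?S (m - 1)))"
    unfolding ac bc[symmetric] sign by (simp add: algebra_simps)
  finally show ?case
    using Suc stirling_bernnum_sum_Suc[of r m] by (simp add: b_def)
qed

lemma bernnum_ord_div_above_order:
  assumes "0 < r" "r \<le> m"
  shows "bernnum_ord r m / real m = real ((m - 1) choose (r - 1)) *
    (\<Sum>j=1..r. (-1) ^ (j - 1) * sstirling r j * bernnum (m - r + j) / real (m - r + j))"
proof -
  have "(\<Sum>j=1..r. (-1) ^ (j - 1) * sstirling r j * bernnum (m - r + j) / real (m - r + j)) =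
      (-1) ^ (r - 1) * stirling_bernnum_sum r m"
    unfolding stirling_bernnum_sum_def sum_distrib_left
  proof (intro sum.cong refl)
    fix j assume "j \<in> {1..r}"
    hence "(-1) ^ (j - 1) * (-1) ^ (r - j) = ((-1) ^ (r - 1) :: real)"
      by (simp flip: power_add)
    thus "(-1) ^ (j - 1) * sstirling r j * bernnum (m - r + j) / real (m - r + j) =
        (-1) ^ (r - 1) * (real (stirling r j) * (bernnum (m - r + j) / real (m - r + j)))"
      by (simp add: sstirling_def flip: mult.assoc)
  qed
  thus ?thesis
    using bernnum_ord_above_order[OF assms] assms by simp
qed

theorem mainTheorem7:
  fixes n r :: nat and x :: real
  assumes "2 \<le> r" and "r \<le> n"
  shows "bernpoly_ord r n x =
      - 2 * real r ^ (n - 1) *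
          (\<Sum>k\<in>{k. 2 * k + 1 \<le> r - 1}.
             (sstirling r (r - 2 * k - 1) / (real r ^ (2 * k) * (2 * k + 1))) *
             (real (n choose (2 * k)) / real ((r - 1) choose (2 * k + 1))) *
             bernpoly (n - 2 * k) (x / real r))
      - 2 * real r ^ (n - 1) *
          (\<Sum>k\<in>{k. r \<le> 2 * k + 1 \<and> 2 * k \<le> n}.
             (bernnum_ord r (2 * k + 1) / (real r ^ (2 * k) * (2 * k + 1))) *
             real (n choose (2 * k)) * bernpoly (n - 2 * k) (x / real r))
    \<and> (\<forall>k. r \<le> 2 * k + 1 \<longrightarrow>
          bernnum_ord r (2 * k + 1) / (2 * k + 1) =
            real ((2 * k) choose (r - 1)) *
            (\<Sum>j=1..r. (-1) ^ (j - 1) * sstirling r j *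
               bernnum (2 * k + 1 - r + j) / real (2 * k + 1 - r + j)))"
proof (intro conjI allI impI, goal_cases)
  case 1
  let ?t = "\<lambda>k. (bernnum_ord r (2 * k + 1) / (real r ^ (2 * k) * (2 * k + 1))) *
    real (n choose (2 * k)) * bernpoly (n - 2 * k) (x / real r)"
  let ?A = "{k. 2 * k + 1 \<le> r - 1}" and ?B = "{k. r \<le> 2 * k + 1 \<and> 2 * k \<le> n}"
  have "{k. 2 * k \<le> n} = ?A \<union> ?B" "?A \<inter> ?B = {}"
    using assms by auto
  moreover have "finite ?A" "finite ?B"
    by (auto intro: finite_subset[of _ "{..n}"] finite_subset[of _ "{..r}"])
  ultimately have "(\<Sum>k | 2 * k \<le> n. ?t k) = sum ?t ?A + sum ?t ?B"
    by (simp add: sum.union_disjoint)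
  moreover have "sum ?t ?A = (\<Sum>k\<in>?A.
      (sstirling r (r - 2 * k - 1) / (real r ^ (2 * k) * (2 * k + 1))) *
      (real (n choose (2 * k)) / real ((r - 1) choose (2 * k + 1))) * bernpoly (n - 2 * k) (x / real r))"
    by (intro sum.cong refl) (auto simp: bernnum_ord_below_order_sstirling)
  ultimately show ?case
    using bernpoly_ord_odd_expansion[of r n x] assms by (simp add: algebra_simps)
next
  case (2 k)
  then show ?case
    using bernnum_ord_div_above_order[of r "2 * k + 1"] assms by simp
qed

end
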